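(* Let $S=\operatorname{Sys}(A,B,C)$ be a $(U,X,Y)$-relation with $A$ bounded (so $C:X\to Y$ is bounded), and suppose $\|e^{At}\|\le ae^{-\alpha t}$ for all $t\ge0$, for some $a\ge1$ and $\alpha\in\mathbb{R}$. Then for all $\beta<\alpha$ the $\beta$-IS-$(0,1)$-gain $h(\beta)$ and the $\beta$-IO-$(0,1)$-gain $g(\beta)$ of $S$ satisfy $$h(\beta)\le\max\left(\frac{a\|B\|}{\alpha-\beta},\ \frac{a\|B\|\|A\|}{\alpha-\beta}+\|B\|\right),\qquad g(\beta)\le\max\left(\frac{a\|B\|\|C\|}{\alpha-\beta},\ \frac{a\|B\|\|A\|\|C\|}{\alpha-\beta}+\|B\|\|C\|\right).$$
   Context: A $(U,X,Y)$-relation is a subset of $C^0(\mathbb{R}_{\ge 0},U)\times C^0(\mathbb{R}_{\ge 0},X)\times C^0(\mathbb{R}_{\ge 0},Y)$. For $A$ generating a strongly continuous semigroup on $X$, bounded $B:U\to X$ and $C:\operatorname{Dom}(A)\to Y$ bounded in the graph norm, $\operatorname{Sys}(A,B,C)$ is the relation of all $(u,x,y)$ with $u\in C^0(\mathbb{R}_{\ge0},U)$, $x\in C^0(\mathbb{R}_{\ge0},\operatorname{Dom}(A))\cap C^1(\mathbb{R}_{\ge0},X)$, $y\in C^0(\mathbb{R}_{\ge0},Y)$, $\dot x=Ax+Bu$, $y=Cx$. Gains: fix $\beta\in\mathbb{R}$, $n,m\in\mathbb{Z}_{\ge0}$. Provided every $(u,x,y)\in S$ with $u\in C^n$ has $y\in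 C^m$, the $\beta$-IO-$(n,m)$-gain of $S$ is the infimum of all $\alpha\ge0$ for which there is a function $b:S\to\mathbb{R}_{\ge0}$ with $\|e^{\beta t}\partial_t^k y(t)\|\le\alpha\max_{0\le j\le n}\|e^{\beta s}\partial_s^j u(s)\|_{L^\infty([0,t],U)}+b(u,x,y)$ for all $k\in\{0,\dots,m\}$, $t\ge0$, and $(u,x,y)\in S$ with $u\in C^n$. The $\beta$-IS-$(n,m)$-gain is defined the same way with $\partial_t^k x(t)$ in place of $\partial_t^k y(t)$. *)

theory Defs
  imports "HOL-Analysis.Analysis"
begin

primrec blinfun_pow :: "('a::real_normed_vector \<Rightarrow>\<^sub>L 'a) \<Rightarrow> nat \<Rightarrow> ('a \<Rightarrow>\<^sub>L 'a)" where
  "blinfun_pow A 0 = id_blinfun"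
| "blinfun_pow A (Suc n) = A o\<^sub>L blinfun_pow A n"

definition blinfun_exp :: "('a::real_normed_vector \<Rightarrow>\<^sub>L 'a) \<Rightarrow> ('a \<Rightarrow>\<^sub>L 'a)" where
  "blinfun_exp A = (\<Sum>n. (1 / fact n) *\<^sub>R blinfun_pow A n)"

primrec hderiv :: "nat \<Rightarrow> (real \<Rightarrow> 'a::real_normed_vector) \<Rightarrow> real \<Rightarrow> 'a" where
  "hderiv 0 f = f"
| "hderiv (Suc k) f = (\<lambda>t. vector_derivative (hderiv k f) (at t within {0..}))"

definition Cn :: "nat \<Rightarrow> (real \<Rightarrow> 'a::real_normed_vector) \<Rightarrow> bool" where
  "Cn n f \<longleftrightarrow>
     (\<forall>k<n. \<forall>t\<ge>0. (hderiv k f has_vector_derivative hderiv (Suc k) f t) (at t within {0..}))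
     \<and> (\<forall>k\<le>n. continuous_on {0..} (hderiv k f))"

definition Sys ::
  "('x::real_normed_vector \<Rightarrow>\<^sub>L 'x) \<Rightarrow> ('u::real_normed_vector \<Rightarrow>\<^sub>L 'x) \<Rightarrow> ('x \<Rightarrow>\<^sub>L 'y::real_normed_vector)
     \<Rightarrow> ((real \<Rightarrow> 'u) \<times> (real \<Rightarrow> 'x) \<times> (real \<Rightarrow> 'y)) set" where
  "Sys A B C = {(u, x, y). Cn 0 u \<and> Cn 1 x \<and> Cn 0 y
      \<and> (\<forall>t\<ge>0. (x has_vector_derivative (A (x t) + B (u t))) (at t within {0..}))
      \<and> (\<forall>t\<ge>0. y t = C (x t))}"

text \<open>max_{0\<le>j\<le>n} \<parallel>e^{\<beta>s} \<partial>^j u(s)\<parallel>_{L^\<infinity>([0,t])}; for continuous data the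
  L^\<infinity> norm over [0,t] is the supremum over [0,t].\<close>
definition input_bound :: "real \<Rightarrow> nat \<Rightarrow> (real \<Rightarrow> 'a::real_normed_vector) \<Rightarrow> real \<Rightarrow> real" where
  "input_bound \<beta> n u t =
     Max ((\<lambda>j. SUP s\<in>{0..t}. norm (exp (\<beta> * s) *\<^sub>R hderiv j u s)) ` {0..n})"

text \<open>If the proviso (C^n inputs give C^m outputs) fails, the gain is undefined;
  we then set it to \<infinity>. The infimum of the empty set is \<infinity>.\<close>
definition gain :: "((real \<Rightarrow> 'u::real_normed_vector) \<times> (real \<Rightarrow> 'x) \<times> (real \<Rightarrow> 'y)) set
     \<Rightarrow> (((real \<Rightarrow> 'u) \<times> (real \<Rightarrow> 'x) \<times> (real \<Rightarrow> 'y)) \<Rightarrow> (real \<Rightarrow> 'w::real_normed_vector))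
     \<Rightarrow> real \<Rightarrow> nat \<Rightarrow> nat \<Rightarrow> ereal" where
  "gain S out \<beta> n m =
    (if (\<forall>p\<in>S. Cn n (fst p) \<longrightarrow> Cn m (out p)) then
       Inf (ereal ` {\<alpha>. \<alpha> \<ge> 0 \<and> (\<exists>b :: _ \<Rightarrow> real. (\<forall>p\<in>S. b p \<ge> 0) \<and>
          (\<forall>p\<in>S. Cn n (fst p) \<longrightarrow> (\<forall>k\<le>m. \<forall>t\<ge>0.
             norm (exp (\<beta> * t) *\<^sub>R hderiv k (out p) t) \<le> \<alpha> * input_bound \<beta> n (fst p) t + b p)))})
     else \<infinity>)"

definition IO_gain :: "((real \<Rightarrow> 'u::real_normed_vector) \<times> (real \<Rightarrow> 'x::real_normed_vector) \<times> (real \<Rightarrow> 'y::real_normed_vector)) set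
     \<Rightarrow> real \<Rightarrow> nat \<Rightarrow> nat \<Rightarrow> ereal" where
  "IO_gain S \<beta> n m = gain S (\<lambda>(u, x, y). y) \<beta> n m"

definition IS_gain :: "((real \<Rightarrow> 'u::real_normed_vector) \<times> (real \<Rightarrow> 'x::real_normed_vector) \<times> (real \<Rightarrow> 'y::real_normed_vector)) set
     \<Rightarrow> real \<Rightarrow> nat \<Rightarrow> nat \<Rightarrow> ereal" where
  "IS_gain S \<beta> n m = gain S (\<lambda>(u, x, y). x) \<beta> n m"

end

theory Submission
  imports Defs
begin

(* For bounded A the exponential series exp(tA) is differentiable with derivative A exp(tA), so every
   trajectory of Sys(A,B,C) obeys the variation-of-constants formula
     x(t) = exp(tA) x(0) + integral_0^t exp((t-s)A) B u(s) ds.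
   If norm (exp(sA)) <= a e^(-alpha s) and e^(beta s) norm (u s) <= K on [0,t], integrating the
   exponential gives e^(beta t) norm (x t) <= a norm (x 0) + a norm B K / (alpha - beta). Then
   x' = Ax + Bu gives the bound on the derivative, y = Cx costs a factor norm C, and the terms in
   x(0) are absorbed into the offset b of the gain. *)

section \<open>The exponential of a bounded operator\<close>

lemma has_vector_derivative_series:
  fixes f :: "nat \<Rightarrow> real \<Rightarrow> 'a::banach"
  assumes "convex S"
    and "\<And>n x. x \<in> S \<Longrightarrow> (f n has_vector_derivative f' n x) (at x within S)"
    and "uniform_limit S (\<lambda>n x. \<Sum>i<n. f' i x) g' sequentially"
    and "x0 \<in> S" "summable (\<lambda>n. f n x0)"
  shows "\<exists>g. \<forall>x\<in>S. (\<lambda>n. f n x) sums g x \<and> (g has_vector_derivative g' x) (at x within S)"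
  unfolding has_vector_derivative_def
proof (rule has_derivative_series[OF assms(1)])
  show "\<forall>\<^sub>F n in sequentially. \<forall>x\<in>S. \<forall>h. norm ((\<Sum>i<n. h *\<^sub>R f' i x) - h *\<^sub>R g' x) \<le> e * norm h"
    if "e > 0" for e
    using uniform_limitD[OF assms(3) that]
  proof eventually_elim
    case (elim n)
    show ?case
    proof (intro ballI allI)
      fix x h assume "x \<in> S"
      have "norm ((\<Sum>i<n. h *\<^sub>R f' i x) - h *\<^sub>R g' x) = \<bar>h\<bar> * norm ((\<Sum>i<n. f' i x) - g' x)"
        by (simp flip: scaleR_diff_right scaleR_sum_right)
      also have "\<dots> \<le> \<bar>h\<bar> * e"
        using elim \<open>x \<in> S\<close> by (intro mult_left_mono) (auto simp: dist_norm less_imp_le)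
      finally show "norm ((\<Sum>i<n. h *\<^sub>R f' i x) - h *\<^sub>R g' x) \<le> e * norm h"
        by (simp add: mult.commute)
    qed
  qed
qed (use assms in \<open>auto simp: has_vector_derivative_def summable_sums\<close>)

interpretation blinfun_compose: bounded_bilinear blinfun_compose
  by (rule bounded_bilinear_blinfun_compose)

lemma blinfun_pow_scaleR: "blinfun_pow (t *\<^sub>R A) n = t ^ n *\<^sub>R blinfun_pow A n"
  by (induction n) (simp_all add: blinfun_compose.scaleR_left blinfun_compose.scaleR_right)

lemma norm_blinfun_pow_le: "norm (blinfun_pow A n) \<le> norm A ^ n"
proof (induction n)
  case (Suc n)
  have "norm (A o\<^sub>L blinfun_pow A n) \<le> norm A * norm (blinfun_pow A n)"
    by (rule norm_blinfun_compose)
  also have "\<dots> \<le> norm A * norm A ^ n"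
    using Suc by (simp add: mult_left_mono)
  finally show ?case by simp
qed (simp add: norm_blinfun_id_le)

lemma blinfun_compose_assoc: "(f o\<^sub>L g) o\<^sub>L h = f o\<^sub>L (g o\<^sub>L h)"
  by (auto intro!: blinfun_eqI)

lemma blinfun_pow_commute: "A o\<^sub>L blinfun_pow A n = blinfun_pow A n o\<^sub>L A"
proof (induction n)
  case (Suc n)
  have "A o\<^sub>L (A o\<^sub>L blinfun_pow A n) = A o\<^sub>L (blinfun_pow A n o\<^sub>L A)"
    by (simp add: Suc)
  then show ?case by (simp add: blinfun_compose_assoc)
qed (auto intro!: blinfun_eqI)

definition blinfun_exp_term :: "('a::real_normed_vector \<Rightarrow>\<^sub>L 'a) \<Rightarrow> real \<Rightarrow> nat \<Rightarrow> ('a \<Rightarrow>\<^sub>L 'a)" where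
  "blinfun_exp_term A t n = (t ^ n / fact n) *\<^sub>R blinfun_pow A n"

lemma norm_blinfun_exp_term_le: "norm (blinfun_exp_term A t n) \<le> (\<bar>t\<bar> * norm A) ^ n / fact n"
proof -
  have "norm (blinfun_exp_term A t n) = \<bar>t\<bar> ^ n / fact n * norm (blinfun_pow A n)"
    by (simp add: blinfun_exp_term_def power_abs)
  also have "\<dots> \<le> \<bar>t\<bar> ^ n / fact n * norm A ^ n"
    by (intro mult_left_mono norm_blinfun_pow_le) auto
  finally show ?thesis by (simp add: power_mult_distrib)
qed

lemma blinfun_exp_term_sums:
  fixes A :: "'a::banach \<Rightarrow>\<^sub>L 'a"
  shows "blinfun_exp_term A t sums blinfun_exp (t *\<^sub>R A)"
proof -
  have "summable (blinfun_exp_term A t)"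
    by (rule summable_comparison_test[OF _ summable_exp[of "\<bar>t\<bar> * norm A"]])
      (use norm_blinfun_exp_term_le in \<open>auto simp: divide_inverse mult.commute\<close>)
  moreover have "blinfun_exp (t *\<^sub>R A) = suminf (blinfun_exp_term A t)"
    unfolding blinfun_exp_def blinfun_exp_term_def blinfun_pow_scaleR by (simp add: divide_inverse mult.commute)
  ultimately show ?thesis
    by (simp add: summable_sums)
qed

lemma uniform_limit_blinfun_exp:
  fixes A :: "'a::banach \<Rightarrow>\<^sub>L 'a"
  shows "uniform_limit {-R<..<R} (\<lambda>n t. \<Sum>i<n. blinfun_exp_term A t i)
           (\<lambda>t. blinfun_exp (t *\<^sub>R A)) sequentially"
proof -
  have "uniform_limit {-R<..<R} (\<lambda>n t. \<Sum>i<n. blinfun_exp_term A t i)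
           (\<lambda>t. \<Sum>i. blinfun_exp_term A t i) sequentially"
  proof (rule Weierstrass_m_test)
    fix n t assume "t \<in> {-R<..<R}"
    then have "(\<bar>t\<bar> * norm A) ^ n / fact n \<le> (R * norm A) ^ n / fact n"
      by (intro divide_right_mono power_mono mult_right_mono) auto
    then show "norm (blinfun_exp_term A t n) \<le> (R * norm A) ^ n / fact n"
      using norm_blinfun_exp_term_le order_trans by blast
  qed (use summable_exp[of "R * norm A"] in \<open>simp add: divide_inverse mult.commute\<close>)
  then show ?thesis
    by (simp add: blinfun_exp_term_sums[THEN sums_unique])
qed

lemma blinfun_exp_term_Suc_has_vector_derivative:
  "((\<lambda>t. blinfun_exp_term A t (Suc n)) has_vector_derivative A o\<^sub>L blinfun_exp_term A t n) (at t)"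
proof -
  have "((\<lambda>t. t ^ Suc n / fact (Suc n)) has_real_derivative (Suc n * t ^ n) / fact (Suc n)) (at t)"
    using DERIV_pow[of "Suc n" t UNIV] by (intro DERIV_cdivide) simp
  also have "(Suc n * t ^ n) / fact (Suc n) = t ^ n / fact n"
    by (simp add: fact_Suc del: of_nat_Suc)
  finally show ?thesis
    using has_vector_derivative_scaleR[OF _ has_vector_derivative_const[of "blinfun_pow A (Suc n)"]]
    by (simp add: blinfun_exp_term_def blinfun_compose.scaleR_right)
qed

lemma blinfun_exp_has_vector_derivative:
  fixes A :: "'a::banach \<Rightarrow>\<^sub>L 'a"
  shows "((\<lambda>t. blinfun_exp (t *\<^sub>R A)) has_vector_derivative A o\<^sub>L blinfun_exp (t *\<^sub>R A)) (at t within T)"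
proof -
  define S where "S = {-(\<bar>t\<bar> + 1)<..<\<bar>t\<bar> + 1}"
  have t: "t \<in> S" and "open S" "convex S"
    by (auto simp: S_def)
  have "uniform_limit S (\<lambda>n s. A o\<^sub>L (\<Sum>i<n. blinfun_exp_term A s i))
      (\<lambda>s. A o\<^sub>L blinfun_exp (s *\<^sub>R A)) sequentially"
    unfolding S_def
    by (rule bounded_linear.uniform_limit[OF blinfun_compose.bounded_linear_right
          uniform_limit_blinfun_exp])
  then have limit: "uniform_limit S (\<lambda>n s. \<Sum>i<n. A o\<^sub>L blinfun_exp_term A s i)
      (\<lambda>s. A o\<^sub>L blinfun_exp (s *\<^sub>R A)) sequentially"
    by (simp add: blinfun_compose.sum_right)
  have terms: "((\<lambda>s. blinfun_exp_term A s (Suc n)) has_vector_derivative A o\<^sub>L blinfun_exp_term A s n)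
      (at s within S)" for n s
    using blinfun_exp_term_Suc_has_vector_derivative by (rule has_vector_derivative_at_within)
  have summable: "summable (\<lambda>n. blinfun_exp_term A t (Suc n))"
    using blinfun_exp_term_sums[THEN sums_summable] by (simp add: summable_Suc_iff)
  from has_vector_derivative_series[OF \<open>convex S\<close> terms limit t summable]
  obtain g where g: "\<And>s. s \<in> S \<Longrightarrow> (\<lambda>n. blinfun_exp_term A s (Suc n)) sums g s"
      "\<And>s. s \<in> S \<Longrightarrow> (g has_vector_derivative A o\<^sub>L blinfun_exp (s *\<^sub>R A)) (at s within S)"
    by blast
  have "blinfun_exp (s *\<^sub>R A) = g s + id_blinfun" if "s \<in> S" for s
  proof -
    have "blinfun_exp_term A s sums (g s + blinfun_exp_term A s 0)"
      using g(1)[OF that] by (simp only: sums_Suc_iff)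
    moreover have "blinfun_exp_term A s 0 = id_blinfun"
      by (simp add: blinfun_exp_term_def)
    ultimately show ?thesis
      using sums_unique2[OF blinfun_exp_term_sums] by simp
  qed
  moreover have "((\<lambda>s. g s + id_blinfun) has_vector_derivative A o\<^sub>L blinfun_exp (t *\<^sub>R A)) (at t within S)"
    using g(2)[OF t] by (simp only: has_vector_derivative_add_const)
  ultimately have "((\<lambda>s. blinfun_exp (s *\<^sub>R A)) has_vector_derivative A o\<^sub>L blinfun_exp (t *\<^sub>R A))
      (at t within S)"
    by (rule has_vector_derivative_transform[OF t])
  then show ?thesis
    by (simp add: at_within_open[OF t \<open>open S\<close>] has_vector_derivative_at_within)
qed

lemma blinfun_exp_zero: "blinfun_exp (0 :: 'a::real_normed_vector \<Rightarrow>\<^sub>L 'a) = id_blinfun"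
proof -
  have "(\<lambda>n. (1 / fact n) *\<^sub>R blinfun_pow (0 :: 'a \<Rightarrow>\<^sub>L 'a) n) = (\<lambda>n. if n = 0 then id_blinfun else 0)"
  proof
    fix n show "(1 / fact n) *\<^sub>R blinfun_pow 0 n = (if n = 0 then id_blinfun else 0)"
      by (cases n) simp_all
  qed
  then show ?thesis
    using sums_single[of 0 "\<lambda>_. id_blinfun :: 'a \<Rightarrow>\<^sub>L 'a"] by (simp add: blinfun_exp_def sums_iff)
qed

lemma blinfun_exp_commute:
  fixes A :: "'a::banach \<Rightarrow>\<^sub>L 'a"
  shows "A o\<^sub>L blinfun_exp (t *\<^sub>R A) = blinfun_exp (t *\<^sub>R A) o\<^sub>L A"
proof -
  have "(\<lambda>n. A o\<^sub>L blinfun_exp_term A t n) sums (A o\<^sub>L blinfun_exp (t *\<^sub>R A))"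
    by (rule blinfun_compose.bounded_linear_right[THEN bounded_linear.sums, OF blinfun_exp_term_sums])
  moreover have "(\<lambda>n. blinfun_exp_term A t n o\<^sub>L A) sums (blinfun_exp (t *\<^sub>R A) o\<^sub>L A)"
    by (rule blinfun_compose.bounded_linear_left[THEN bounded_linear.sums, OF blinfun_exp_term_sums])
  ultimately show ?thesis
    by (simp add: blinfun_exp_term_def blinfun_compose.scaleR_left blinfun_compose.scaleR_right
        blinfun_pow_commute sums_unique2)
qed

section \<open>Variation of constants and exponential decay\<close>

lemma variation_of_constants:
  fixes A :: "'a::banach \<Rightarrow>\<^sub>L 'a"
  assumes "0 \<le> t"
    and deriv: "\<And>s. s \<in> {0..t} \<Longrightarrow> (x has_vector_derivative A (x s) + f s) (at s within {0..t})"
  shows "((\<lambda>s. blinfun_exp ((t - s) *\<^sub>R A) (f s)) has_integral x t - blinfun_exp (t *\<^sub>R A) (x 0)) {0..t}"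
proof -
  have "((\<lambda>s. blinfun_exp ((t - s) *\<^sub>R A) (x s)) has_vector_derivative
      blinfun_exp ((t - s) *\<^sub>R A) (f s)) (at s within {0..t})" if s: "s \<in> {0..t}" for s
  proof -
    have reflect: "((\<lambda>s. t - s) has_vector_derivative - 1) (at s within {0..t})"
      by (auto intro!: derivative_eq_intros)
    have exp_deriv: "((\<lambda>s. blinfun_exp ((t - s) *\<^sub>R A)) has_vector_derivative
        - (A o\<^sub>L blinfun_exp ((t - s) *\<^sub>R A))) (at s within {0..t})"
      using vector_diff_chain_within[OF reflect blinfun_exp_has_vector_derivative]
      by (simp add: o_def)
    have commute: "A (blinfun_exp ((t - s) *\<^sub>R A) y) = blinfun_exp ((t - s) *\<^sub>R A) (A y)" for y
      by (metis blinfun_apply_blinfun_compose blinfun_exp_commute)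
    from bounded_bilinear.has_vector_derivative[OF bounded_bilinear_blinfun_apply exp_deriv deriv[OF s]]
    show ?thesis
      by (simp add: blinfun.add_right blinfun.minus_left commute)
  qed
  from fundamental_theorem_of_calculus[OF \<open>0 \<le> t\<close> this]
  show ?thesis
    by (simp add: blinfun_exp_zero)
qed

lemma has_integral_exp_linear:
  fixes c t :: real
  assumes "c \<noteq> 0" and "0 \<le> t"
  shows "((\<lambda>s. exp (c * s)) has_integral (exp (c * t) - 1) / c) {0..t}"
proof -
  have "((\<lambda>s. exp (c * s) / c) has_vector_derivative exp (c * s)) (at s within {0..t})" for s
    using \<open>c \<noteq> 0\<close>
    by (auto intro!: derivative_eq_intros simp flip: has_real_derivative_iff_has_vector_derivative)
  from fundamental_theorem_of_calculus[OF \<open>0 \<le> t\<close> this]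
  show ?thesis
    by (simp add: diff_divide_distrib)
qed

lemma exp_decay_const_nonneg:
  assumes "\<forall>s\<ge>0. norm (blinfun_exp (s *\<^sub>R A)) \<le> a * exp (- \<alpha> * s)"
  shows "0 \<le> a"
proof -
  have "norm (blinfun_exp (0 *\<^sub>R A)) \<le> a"
    using assms by auto
  then show ?thesis
    by (rule order_trans[OF norm_ge_zero])
qed

lemma norm_forced_response_le:
  fixes A :: "'a::banach \<Rightarrow>\<^sub>L 'a"
  assumes decay: "\<forall>s\<ge>0. norm (blinfun_exp (s *\<^sub>R A)) \<le> a * exp (- \<alpha> * s)"
    and "\<beta> < \<alpha>" and "0 \<le> t"
    and deriv: "\<And>s. s \<in> {0..t} \<Longrightarrow> (x has_vector_derivative A (x s) + f s) (at s within {0..t})"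
    and forcing: "\<And>s. s \<in> {0..t} \<Longrightarrow> exp (\<beta> * s) * norm (f s) \<le> K"
  shows "norm (x t - blinfun_exp (t *\<^sub>R A) (x 0)) \<le> exp (- \<beta> * t) * (a * K / (\<alpha> - \<beta>))"
proof -
  define c where "c = \<alpha> - \<beta>"
  have "c > 0"
    using \<open>\<beta> < \<alpha>\<close> by (simp add: c_def)
  have "0 \<le> a"
    using exp_decay_const_nonneg[OF decay] .
  have "norm (f 0) \<le> K"
    using forcing[of 0] \<open>0 \<le> t\<close> by simp
  then have "0 \<le> K"
    by (rule order_trans[OF norm_ge_zero])
  have pointwise: "norm (blinfun_exp ((t - s) *\<^sub>R A) (f s)) \<le> a * K * exp (- \<alpha> * t) * exp (c * s)"
    if s: "s \<in> {0..t}" for s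
  proof -
    have "norm (f s) = exp (- \<beta> * s) * (exp (\<beta> * s) * norm (f s))"
      by (simp add: exp_minus field_simps)
    also have "\<dots> \<le> exp (- \<beta> * s) * K"
      using forcing[OF s] by (intro mult_left_mono) auto
    finally have f_le: "norm (f s) \<le> exp (- \<beta> * s) * K" .
    have "norm (blinfun_exp ((t - s) *\<^sub>R A) (f s)) \<le> norm (blinfun_exp ((t - s) *\<^sub>R A)) * norm (f s)"
      by (rule norm_blinfun)
    also have "\<dots> \<le> a * exp (- \<alpha> * (t - s)) * (exp (- \<beta> * s) * K)"
      using decay s f_le \<open>0 \<le> a\<close> by (intro mult_mono) auto
    also have "\<dots> = a * K * exp (- \<alpha> * t) * exp (c * s)"
      by (simp add: c_def algebra_simps flip: exp_add)
    finally show ?thesis .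
  qed
  have "((\<lambda>s. a * K * exp (- \<alpha> * t) * exp (c * s)) has_integral
      a * K * exp (- \<alpha> * t) * ((exp (c * t) - 1) / c)) {0..t}"
    using has_integral_exp_linear[of c t] \<open>c > 0\<close> \<open>0 \<le> t\<close> by (intro has_integral_mult_right) auto
  from has_integral_norm_bound_integral_component[OF variation_of_constants[OF \<open>0 \<le> t\<close> deriv] this, of 1]
  have "norm (x t - blinfun_exp (t *\<^sub>R A) (x 0)) \<le> a * K * exp (- \<alpha> * t) * ((exp (c * t) - 1) / c)"
    using pointwise by simp
  also have "\<dots> \<le> a * K * exp (- \<alpha> * t) * (exp (c * t) / c)"
    using \<open>0 \<le> a\<close> \<open>0 \<le> K\<close> \<open>c > 0\<close> by (intro mult_left_mono divide_right_mono) auto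
  also have "\<dots> = exp (- \<beta> * t) * (a * K / (\<alpha> - \<beta>))"
    by (simp add: c_def algebra_simps flip: exp_add)
  finally show ?thesis .
qed

lemma exp_weighted_norm_le:
  fixes A :: "'a::banach \<Rightarrow>\<^sub>L 'a"
  assumes decay: "\<forall>s\<ge>0. norm (blinfun_exp (s *\<^sub>R A)) \<le> a * exp (- \<alpha> * s)"
    and "\<beta> < \<alpha>" and "0 \<le> t"
    and "\<And>s. s \<in> {0..t} \<Longrightarrow> (x has_vector_derivative A (x s) + f s) (at s within {0..t})"
    and "\<And>s. s \<in> {0..t} \<Longrightarrow> exp (\<beta> * s) * norm (f s) \<le> K"
  shows "exp (\<beta> * t) * norm (x t) \<le> a * norm (x 0) + a * K / (\<alpha> - \<beta>)"
proof -
  have "0 \<le> a"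
    using exp_decay_const_nonneg[OF decay] .
  have free: "norm (blinfun_exp (t *\<^sub>R A) (x 0)) \<le> a * exp (- \<alpha> * t) * norm (x 0)"
    using norm_blinfun[of "blinfun_exp (t *\<^sub>R A)" "x 0"] decay \<open>0 \<le> t\<close>
    by (meson mult_right_mono norm_ge_zero order_trans)
  have "exp (\<beta> * t) * norm (x t)
      \<le> exp (\<beta> * t) * (a * exp (- \<alpha> * t) * norm (x 0) + exp (- \<beta> * t) * (a * K / (\<alpha> - \<beta>)))"
    using norm_triangle_sub[of "x t" "blinfun_exp (t *\<^sub>R A) (x 0)"] free
      norm_forced_response_le[OF assms]
    by (intro mult_left_mono) auto
  also have "\<dots> = a * exp (- ((\<alpha> - \<beta>) * t)) * norm (x 0) + a * K / (\<alpha> - \<beta>)"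
    by (simp add: algebra_simps exp_minus_inverse flip: exp_add)
  also have "\<dots> \<le> a * 1 * norm (x 0) + a * K / (\<alpha> - \<beta>)"
    using \<open>0 \<le> a\<close> \<open>\<beta> < \<alpha>\<close> \<open>0 \<le> t\<close> by (intro add_right_mono mult_right_mono mult_left_mono) auto
  finally show ?thesis
    by simp
qed

lemma at_within_atLeast_neq_bot:
  fixes a t :: real
  assumes "a \<le> t"
  shows "at t within {a..} \<noteq> bot"
proof
  assume "at t within {a..} = bot"
  moreover have "at t within {t<..} \<le> at t within {a..}"
    using assms by (intro at_le) auto
  ultimately show False
    using trivial_limit_at_right_real[of t] by (simp add: bot_unique)
qed

lemma norm_le_input_bound:
  assumes "continuous_on {0..} u" and "s \<in> {0..t}"
  shows "exp (\<beta> * s) * norm (u s) \<le> input_bound \<beta> 0 u t"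
proof -
  have "continuous_on {0..t} (\<lambda>s. norm (exp (\<beta> * s) *\<^sub>R u s))"
    using continuous_on_subset[OF assms(1)] by (intro continuous_intros) auto
  then have "bdd_above ((\<lambda>s. norm (exp (\<beta> * s) *\<^sub>R u s)) ` {0..t})"
    by (intro bounded_imp_bdd_above compact_imp_bounded compact_continuous_image) auto
  then show ?thesis
    using cSUP_upper[OF assms(2)] by (simp add: input_bound_def)
qed

lemma Sys_has_vector_derivative:
  assumes "(u, x, y) \<in> Sys A B C" and "0 \<le> t"
  shows "(x has_vector_derivative A (x t) + B (u t)) (at t within {0..})"
    and "(y has_vector_derivative C (A (x t) + B (u t))) (at t within {0..})"
proof -
  show x': "(x has_vector_derivative A (x t) + B (u t)) (at t within {0..})"
    using assms by (simp add: Sys_def)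
  have "\<forall>s\<ge>0. y s = C (x s)"
    using assms(1) by (simp add: Sys_def)
  from bounded_linear.has_vector_derivative[OF blinfun.bounded_linear_right[of C] x']
  show "(y has_vector_derivative C (A (x t) + B (u t))) (at t within {0..})"
    by (rule has_vector_derivative_transform[rotated 2]) (use assms(2) \<open>\<forall>s\<ge>0. y s = C (x s)\<close> in auto)
qed

lemma Sys_hderiv:
  assumes "(u, x, y) \<in> Sys A B C" and "0 \<le> t"
  shows "hderiv 1 x t = A (x t) + B (u t)"
    and "k \<le> 1 \<Longrightarrow> hderiv k y t = C (hderiv k x t)"
proof -
  note vector_derivative_within[OF at_within_atLeast_neq_bot[OF \<open>0 \<le> t\<close>]]
  note x' = this[OF Sys_has_vector_derivative(1)[OF assms]]
    and y' = this[OF Sys_has_vector_derivative(2)[OF assms]]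
  show "hderiv 1 x t = A (x t) + B (u t)"
    using x' by simp
  have "y t = C (x t)"
    using assms by (simp add: Sys_def)
  then show "hderiv k y t = C (hderiv k x t)" if "k \<le> 1"
    using that x' y' by (cases k) auto
qed

lemma Sys_output_Cn1:
  assumes "(u, x, y) \<in> Sys A B C"
  shows "Cn 1 y"
proof -
  have y1: "hderiv 1 y t = C (hderiv 1 x t)" if "0 \<le> t" for t
    by (rule Sys_hderiv(2)[OF assms that]) simp
  have y': "(y has_vector_derivative hderiv 1 y t) (at t within {0..})" if "0 \<le> t" for t
  proof -
    from y1[OF that] have "hderiv 1 y t = C (A (x t) + B (u t))"
      by (simp only: Sys_hderiv(1)[OF assms that])
    then show ?thesis
      using Sys_has_vector_derivative(2)[OF assms that] by simp
  qed
  have "Cn 1 x" and "Cn 0 y"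
    using assms by (simp_all add: Sys_def)
  then have "continuous_on {0..} (hderiv 1 x)" and "continuous_on {0..} y"
    unfolding Cn_def by auto
  then have "continuous_on {0..} (\<lambda>t. C (hderiv 1 x t))"
    by (intro continuous_intros)
  then have "continuous_on {0..} (hderiv 1 y)"
    by (rule continuous_on_eq) (metis atLeast_iff y1)
  then show ?thesis
    using y' \<open>continuous_on {0..} y\<close> by (auto simp: Cn_def le_Suc_eq)
qed

lemma input_bound_nonneg:
  assumes "continuous_on {0..} u" and "0 \<le> t"
  shows "0 \<le> input_bound \<beta> 0 u t"
  using norm_le_input_bound[OF assms(1), of 0 t \<beta>] assms(2) by (simp add: order_trans[OF norm_ge_zero])

lemma Sys_state_bound:
  fixes A :: "'x::banach \<Rightarrow>\<^sub>L 'x"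
  assumes decay: "\<forall>s\<ge>0. norm (blinfun_exp (s *\<^sub>R A)) \<le> a * exp (- \<alpha> * s)"
    and "\<beta> < \<alpha>" and S: "(u, x, y) \<in> Sys A B C" and "0 \<le> t"
  shows "exp (\<beta> * t) * norm (x t) \<le> a * norm (x 0) + a * norm B / (\<alpha> - \<beta>) * input_bound \<beta> 0 u t"
proof -
  have u: "continuous_on {0..} u"
    using S by (simp add: Sys_def Cn_def)
  have "exp (\<beta> * t) * norm (x t) \<le> a * norm (x 0) + a * (norm B * input_bound \<beta> 0 u t) / (\<alpha> - \<beta>)"
  proof (rule exp_weighted_norm_le[OF decay \<open>\<beta> < \<alpha>\<close> \<open>0 \<le> t\<close>])
    fix s assume s: "s \<in> {0..t}"
    show "(x has_vector_derivative A (x s) + B (u s)) (at s within {0..t})"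
      using s by (intro has_vector_derivative_within_subset[OF Sys_has_vector_derivative(1)[OF S]]) auto
    have "exp (\<beta> * s) * norm (B (u s)) \<le> norm B * (exp (\<beta> * s) * norm (u s))"
      using norm_blinfun[of B "u s"] by (simp add: mult.left_commute mult_left_mono)
    also have "\<dots> \<le> norm B * input_bound \<beta> 0 u t"
      using norm_le_input_bound[OF u s] by (intro mult_left_mono) auto
    finally show "exp (\<beta> * s) * norm (B (u s)) \<le> norm B * input_bound \<beta> 0 u t" .
  qed
  then show ?thesis
    by (simp add: algebra_simps)
qed

lemma Sys_state_derivative_bound:
  fixes A :: "'x::banach \<Rightarrow>\<^sub>L 'x"
  assumes "\<forall>s\<ge>0. norm (blinfun_exp (s *\<^sub>R A)) \<le> a * exp (- \<alpha> * s)"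
    and "\<beta> < \<alpha>" and S: "(u, x, y) \<in> Sys A B C" and "0 \<le> t"
  shows "exp (\<beta> * t) * norm (hderiv 1 x t)
    \<le> norm A * a * norm (x 0) + (a * norm B * norm A / (\<alpha> - \<beta>) + norm B) * input_bound \<beta> 0 u t"
proof -
  have u: "continuous_on {0..} u"
    using S by (simp add: Sys_def Cn_def)
  have "exp (\<beta> * t) * norm (hderiv 1 x t) \<le> exp (\<beta> * t) * (norm A * norm (x t) + norm B * norm (u t))"
    unfolding Sys_hderiv(1)[OF S \<open>0 \<le> t\<close>]
    by (intro mult_left_mono norm_triangle_le add_mono norm_blinfun) auto
  also have "\<dots> = norm A * (exp (\<beta> * t) * norm (x t)) + norm B * (exp (\<beta> * t) * norm (u t))"
    by (simp add: algebra_simps)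
  also have "\<dots> \<le> norm A * (a * norm (x 0) + a * norm B / (\<alpha> - \<beta>) * input_bound \<beta> 0 u t)
      + norm B * input_bound \<beta> 0 u t"
    using Sys_state_bound[OF assms] norm_le_input_bound[OF u, of t] \<open>0 \<le> t\<close>
    by (intro add_mono mult_left_mono) auto
  finally show ?thesis
    by (simp add: algebra_simps)
qed

lemma Sys_hderiv_state_bound:
  fixes A :: "'x::banach \<Rightarrow>\<^sub>L 'x"
  assumes decay: "\<forall>s\<ge>0. norm (blinfun_exp (s *\<^sub>R A)) \<le> a * exp (- \<alpha> * s)"
    and "\<beta> < \<alpha>" and S: "(u, x, y) \<in> Sys A B C" and "0 \<le> t" and "k \<le> 1"
  shows "norm (exp (\<beta> * t) *\<^sub>R hderiv k x t)
    \<le> max (a * norm B / (\<alpha> - \<beta>)) (a * norm B * norm A / (\<alpha> - \<beta>) + norm B) * input_bound \<beta> 0 u t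
      + (1 + norm A) * a * norm (x 0)"
proof -
  let ?K = "input_bound \<beta> 0 u t"
  let ?c = "a * norm B / (\<alpha> - \<beta>)" and ?d = "a * norm B * norm A / (\<alpha> - \<beta>) + norm B"
  have "0 \<le> a"
    using exp_decay_const_nonneg[OF decay] .
  have "0 \<le> ?K"
    using S \<open>0 \<le> t\<close> by (intro input_bound_nonneg) (simp_all add: Sys_def Cn_def)
  then have c: "?c * ?K \<le> max ?c ?d * ?K" and d: "?d * ?K \<le> max ?c ?d * ?K"
    by (intro mult_right_mono; simp)+
  have x0: "a * norm (x 0) \<le> (1 + norm A) * a * norm (x 0)"
    and x0': "norm A * a * norm (x 0) \<le> (1 + norm A) * a * norm (x 0)"
    using \<open>0 \<le> a\<close> by (simp_all add: algebra_simps)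
  consider "k = 0" | "k = 1"
    using \<open>k \<le> 1\<close> by linarith
  then show ?thesis
  proof cases
    case 1
    then show ?thesis
      using Sys_state_bound[OF assms(1-4)] c x0 by (simp add: mult.commute)
  next
    case 2
    then show ?thesis
      using Sys_state_derivative_bound[OF assms(1-4)] d x0' by simp
  qed
qed

lemma Sys_hderiv_output_bound:
  fixes A :: "'x::banach \<Rightarrow>\<^sub>L 'x"
  assumes "\<forall>s\<ge>0. norm (blinfun_exp (s *\<^sub>R A)) \<le> a * exp (- \<alpha> * s)"
    and "\<beta> < \<alpha>" and S: "(u, x, y) \<in> Sys A B C" and "0 \<le> t" and "k \<le> 1"
  shows "norm (exp (\<beta> * t) *\<^sub>R hderiv k y t)
    \<le> norm C * (max (a * norm B / (\<alpha> - \<beta>)) (a * norm B * norm A / (\<alpha> - \<beta>) + norm B) * input_bound \<beta> 0 u t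
      + (1 + norm A) * a * norm (x 0))"
proof -
  have "norm (exp (\<beta> * t) *\<^sub>R hderiv k y t) = norm (C (exp (\<beta> * t) *\<^sub>R hderiv k x t))"
    by (simp add: Sys_hderiv(2)[OF S \<open>0 \<le> t\<close> \<open>k \<le> 1\<close>] blinfun.scaleR_right)
  also have "\<dots> \<le> norm C * norm (exp (\<beta> * t) *\<^sub>R hderiv k x t)"
    by (rule norm_blinfun)
  also have "\<dots> \<le> norm C * (max (a * norm B / (\<alpha> - \<beta>)) (a * norm B * norm A / (\<alpha> - \<beta>) + norm B)
      * input_bound \<beta> 0 u t + (1 + norm A) * a * norm (x 0))"
    by (intro mult_left_mono Sys_hderiv_state_bound[OF assms]) simp
  finally show ?thesis .
qed

lemma gain_le:
  assumes "\<forall>p\<in>S. Cn n (fst p) \<longrightarrow> Cn m (out p)" and "0 \<le> M" and "\<forall>p\<in>S. 0 \<le> b p"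
    and "\<And>p k t. p \<in> S \<Longrightarrow> Cn n (fst p) \<Longrightarrow> k \<le> m \<Longrightarrow> 0 \<le> t \<Longrightarrow>
      norm (exp (\<beta> * t) *\<^sub>R hderiv k (out p) t) \<le> M * input_bound \<beta> n (fst p) t + b p"
  shows "gain S out \<beta> n m \<le> ereal M"
  unfolding gain_def using assms by (auto intro!: Inf_lower imageI exI[where x = b])

lemma IS_gain_Sys_le:
  fixes A :: "'x::banach \<Rightarrow>\<^sub>L 'x"
  assumes decay: "\<forall>s\<ge>0. norm (blinfun_exp (s *\<^sub>R A)) \<le> a * exp (- \<alpha> * s)" and "\<beta> < \<alpha>"
  shows "IS_gain (Sys A B C) \<beta> 0 1
    \<le> ereal (max (a * norm B / (\<alpha> - \<beta>)) (a * norm B * norm A / (\<alpha> - \<beta>) + norm B))"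
  unfolding IS_gain_def
proof (rule gain_le[where b = "\<lambda>(u, x, y). (1 + norm A) * a * norm (x 0)"])
  have "0 \<le> a"
    using exp_decay_const_nonneg[OF decay] .
  with \<open>\<beta> < \<alpha>\<close> show "0 \<le> max (a * norm B / (\<alpha> - \<beta>)) (a * norm B * norm A / (\<alpha> - \<beta>) + norm B)"
    by (simp add: le_max_iff_disj)
  with \<open>0 \<le> a\<close> show "\<forall>p\<in>Sys A B C. 0 \<le> (\<lambda>(u, x, y). (1 + norm A) * a * norm (x 0)) p"
    by auto
  show "\<forall>p\<in>Sys A B C. Cn 0 (fst p) \<longrightarrow> Cn 1 ((\<lambda>(u, x, y). x) p)"
    by (auto simp: Sys_def)
qed (use Sys_hderiv_state_bound[OF assms] in auto)

lemma IO_gain_Sys_le: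
  fixes A :: "'x::banach \<Rightarrow>\<^sub>L 'x"
  assumes decay: "\<forall>s\<ge>0. norm (blinfun_exp (s *\<^sub>R A)) \<le> a * exp (- \<alpha> * s)" and "\<beta> < \<alpha>"
  shows "IO_gain (Sys A B C) \<beta> 0 1
    \<le> ereal (norm C * max (a * norm B / (\<alpha> - \<beta>)) (a * norm B * norm A / (\<alpha> - \<beta>) + norm B))"
  unfolding IO_gain_def
proof (rule gain_le[where b = "\<lambda>(u, x, y). norm C * ((1 + norm A) * a * norm (x 0))"])
  have "0 \<le> a"
    using exp_decay_const_nonneg[OF decay] .
  with \<open>\<beta> < \<alpha>\<close> show "0 \<le> norm C * max (a * norm B / (\<alpha> - \<beta>)) (a * norm B * norm A / (\<alpha> - \<beta>) + norm B)"
    by (simp add: le_max_iff_disj)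
  with \<open>0 \<le> a\<close> show "\<forall>p\<in>Sys A B C. 0 \<le> (\<lambda>(u, x, y). norm C * ((1 + norm A) * a * norm (x 0))) p"
    by auto
  show "\<forall>p\<in>Sys A B C. Cn 0 (fst p) \<longrightarrow> Cn 1 ((\<lambda>(u, x, y). y) p)"
    using Sys_output_Cn1 by fastforce
qed (use Sys_hderiv_output_bound[OF assms] in \<open>auto simp: distrib_left mult.assoc\<close>)

theorem lemma4p9:
  fixes A :: "'x::banach \<Rightarrow>\<^sub>L 'x"
    and B :: "'u::banach \<Rightarrow>\<^sub>L 'x"
    and C :: "'x \<Rightarrow>\<^sub>L 'y::banach"
    and a \<alpha> \<beta> :: real
  assumes "a \<ge> 1"
    and "\<forall>t\<ge>0. norm (blinfun_exp (t *\<^sub>R A)) \<le> a * exp (- \<alpha> * t)"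
    and "\<beta> < \<alpha>"
  shows "IS_gain (Sys A B C) \<beta> 0 1
           \<le> ereal (max (a * norm B / (\<alpha> - \<beta>)) (a * norm B * norm A / (\<alpha> - \<beta>) + norm B))
       \<and> IO_gain (Sys A B C) \<beta> 0 1
           \<le> ereal (max (a * norm B * norm C / (\<alpha> - \<beta>))
                        (a * norm B * norm A * norm C / (\<alpha> - \<beta>) + norm B * norm C))"
proof -
  have "norm C * max (a * norm B / (\<alpha> - \<beta>)) (a * norm B * norm A / (\<alpha> - \<beta>) + norm B)
      = max (a * norm B * norm C / (\<alpha> - \<beta>)) (a * norm B * norm A * norm C / (\<alpha> - \<beta>) + norm B * norm C)"
    by (simp add: max_mult_distrib_left algebra_simps)
  with IO_gain_Sys_le[OF assms(2,3), where B = B and C = C] show ?thesis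
    using IS_gain_Sys_le[OF assms(2,3)] by simp
qed

end
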